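(* A homomorphism $h:\mathbf A\to\mathbf B$ of $\sigma$-structures is a non-retraction if and only if there is a component $\mathbf C$ of $\mathbf B$ such that for no substructure $\mathbf D\subseteq\mathbf A$ is the restriction of $h$ to $\mathbf D$ an isomorphism $\mathbf D\to\mathbf C$.
   Context: A type $\sigma$ is a finite set of relation symbols with arities; a $\sigma$-structure $\mathbf A$ is a finite set $V(\mathbf A)$ with an $r$-ary relation $R(\mathbf A)$ for each $R$ of arity $r$; homomorphisms are relation-preserving maps. $\mathbf A$ is a substructure of $\mathbf B$ if $V(\mathbf A)\subseteq V(\mathbf B)$ and $R(\mathbf A)\subseteq R(\mathbf B)$ for all $R$. The incidence multigraph of $\mathbf B$ is bipartite with parts $V(\mathbf B)$ and the blocks $(R,(x_1,\dots,x_r))$, $(x_1,\dots,x_r)\in R(\mathbf B)$, with an edge from $x_i$ to the block for each $i$; the components of $\mathbf B$ are the substructures determined by the connected components of this multigraph. A homomorphism $h:\mathbf A\to\mathbf B$ is a retraction if there is a homomorphism $g:\mathbf B\to\mathbf A$ with $h\circ g$ the identity of $\mathbf B$; otherwise it is a non-retraction. *)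

theory Defs
  imports Main
begin

text \<open>A type sigma is a finite set of relation symbols together with an arity function.
  A structure has a vertex set and, for each relation symbol, a set of tuples (lists).\<close>

record ('v, 'r) struct =
  V :: "'v set"
  Rel :: "'r \<Rightarrow> 'v list set"

definition is_type :: "'r set \<Rightarrow> bool" where
  "is_type sigma \<longleftrightarrow> finite sigma"

definition is_struct :: "'r set \<Rightarrow> ('r \<Rightarrow> nat) \<Rightarrow> ('v, 'r) struct \<Rightarrow> bool" where
  "is_struct sigma ar A \<longleftrightarrow> finite (V A) \<and>
     (\<forall>R. R \<notin> sigma \<longrightarrow> Rel A R = {}) \<and>
     (\<forall>R\<in>sigma. \<forall>t\<in>Rel A R. length t = ar R \<and> set t \<subseteq> V A)"

definition is_hom :: "('a, 'r) struct \<Rightarrow> ('b, 'r) struct \<Rightarrow> ('a \<Rightarrow> 'b) \<Rightarrow> bool" where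
  "is_hom A B h \<longleftrightarrow> (\<forall>x\<in>V A. h x \<in> V B) \<and> (\<forall>R. \<forall>t\<in>Rel A R. map h t \<in> Rel B R)"

definition is_retraction :: "('a, 'r) struct \<Rightarrow> ('b, 'r) struct \<Rightarrow> ('a \<Rightarrow> 'b) \<Rightarrow> bool" where
  "is_retraction A B h \<longleftrightarrow> is_hom A B h \<and>
     (\<exists>g. is_hom B A g \<and> (\<forall>y\<in>V B. h (g y) = y))"

definition substructure :: "'r set \<Rightarrow> ('r \<Rightarrow> nat) \<Rightarrow> ('v, 'r) struct \<Rightarrow> ('v, 'r) struct \<Rightarrow> bool" where
  "substructure sigma ar D A \<longleftrightarrow> is_struct sigma ar D \<and> V D \<subseteq> V A \<and> (\<forall>R. Rel D R \<subseteq> Rel A R)"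

text \<open>Nodes of the incidence multigraph: vertices and blocks (R, tuple).\<close>

datatype ('v, 'r) inode = VNode 'v | BNode 'r "'v list"

definition inodes :: "('v, 'r) struct \<Rightarrow> ('v, 'r) inode set" where
  "inodes B = VNode ` V B \<union> {BNode R t | R t. t \<in> Rel B R}"

definition iedges :: "('v, 'r) struct \<Rightarrow> (('v, 'r) inode \<times> ('v, 'r) inode) set" where
  "iedges B = {(VNode x, BNode R t) | x R t. t \<in> Rel B R \<and> x \<in> set t}
            \<union> {(BNode R t, VNode x) | x R t. t \<in> Rel B R \<and> x \<in> set t}"

definition iconn :: "('v, 'r) struct \<Rightarrow> (('v, 'r) inode \<times> ('v, 'r) inode) set" where
  "iconn B = Id_on (inodes B) \<union> (iedges B)\<^sup>+"

definition struct_of_nodes :: "('v, 'r) inode set \<Rightarrow> ('v, 'r) struct" where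
  "struct_of_nodes K = \<lparr> V = {x. VNode x \<in> K}, Rel = (\<lambda>R. {t. BNode R t \<in> K}) \<rparr>"

definition is_component :: "('v, 'r) struct \<Rightarrow> ('v, 'r) struct \<Rightarrow> bool" where
  "is_component C B \<longleftrightarrow> (\<exists>K \<in> inodes B // iconn B. C = struct_of_nodes K)"

definition restr_iso :: "('a \<Rightarrow> 'b) \<Rightarrow> ('a, 'r) struct \<Rightarrow> ('b, 'r) struct \<Rightarrow> bool" where
  "restr_iso h D C \<longleftrightarrow> bij_betw h (V D) (V C) \<and>
     (\<forall>R. \<forall>t. set t \<subseteq> V D \<longrightarrow> (t \<in> Rel D R \<longleftrightarrow> map h t \<in> Rel C R))"

end

theory Submission
  imports Defs
begin

text \<open>If \<open>g\<close> is a section of \<open>h\<close>, then \<open>g\<close> maps every substructure \<open>C\<close> of \<open>\<B>\<close> onto a substructure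
  of \<open>\<A>\<close> on which \<open>h\<close> restricts to an isomorphism onto \<open>C\<close>; in particular every component has
  such a preimage. Conversely, if every component \<open>C\<close> of \<open>\<B>\<close> has such a preimage \<open>D\<^sub>C\<close>, the
  inverses of the bijections \<open>h|D\<^sub>C\<close> glue to a map \<open>g\<close> on \<open>V(\<B>)\<close>. It is a homomorphism because
  every tuple of \<open>\<B>\<close> lies inside a single component, where \<open>g\<close> is the inverse of an isomorphism.\<close>

lemma struct_tuple_subset:
  assumes "is_struct sigma ar B" "t \<in> Rel B R"
  shows "set t \<subseteq> V B"
  using assms unfolding is_struct_def by (cases "R \<in> sigma") auto

lemma substructure_tuple_subset:
  assumes "substructure sigma ar C B" "t \<in> Rel C R"
  shows "set t \<subseteq> V C"
  using assms struct_tuple_subset[of sigma ar C] unfolding substructure_def by blast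

lemma equiv_iconn:
  assumes "is_struct sigma ar B"
  shows "equiv (inodes B) (iconn B)"
proof -
  have "iedges B \<subseteq> inodes B \<times> inodes B"
    using struct_tuple_subset[OF assms] unfolding iedges_def inodes_def by blast
  then have "iconn B \<subseteq> inodes B \<times> inodes B"
    using trancl_subset_Sigma unfolding iconn_def by blast
  moreover have "sym (iconn B)"
  proof -
    have "sym (iedges B)" unfolding sym_def iedges_def by blast
    then show ?thesis using sym_trancl unfolding iconn_def sym_def by blast
  qed
  moreover have "trans (iconn B)"
    unfolding trans_def iconn_def by (auto intro: trancl_trans)
  ultimately show ?thesis
    unfolding equiv_def refl_on_def by (auto simp: iconn_def)
qed

lemma component_tuple_subset:
  assumes "is_struct sigma ar B" "K \<in> inodes B // iconn B"
    and "t \<in> Rel (struct_of_nodes K) R"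
  shows "set t \<subseteq> V (struct_of_nodes K)"
proof
  fix x assume "x \<in> set t"
  have "BNode R t \<in> K" using assms(3) unfolding struct_of_nodes_def by simp
  moreover have "BNode R t \<in> inodes B"
    using calculation in_quotient_imp_subset[OF equiv_iconn[OF assms(1)] assms(2)] by blast
  then have "(BNode R t, VNode x) \<in> iconn B"
    using \<open>x \<in> set t\<close> unfolding iconn_def iedges_def inodes_def by blast
  ultimately have "VNode x \<in> K"
    using in_quotient_imp_closed[OF equiv_iconn[OF assms(1)] assms(2)] by blast
  then show "x \<in> V (struct_of_nodes K)" unfolding struct_of_nodes_def by simp
qed

lemma component_substructure:
  assumes "is_struct sigma ar B" "is_component C B"
  shows "substructure sigma ar C B"
proof -
  obtain K where K: "K \<in> inodes B // iconn B" and C: "C = struct_of_nodes K"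
    using assms(2) unfolding is_component_def by blast
  have "K \<subseteq> inodes B" using in_quotient_imp_subset[OF equiv_iconn[OF assms(1)] K] .
  then have "V C \<subseteq> V B" "\<And>R. Rel C R \<subseteq> Rel B R"
    unfolding C struct_of_nodes_def inodes_def by auto
  moreover have "finite (V C)"
    using \<open>V C \<subseteq> V B\<close> assms(1) finite_subset unfolding is_struct_def by blast
  ultimately show ?thesis
    using assms(1) component_tuple_subset[OF assms(1) K]
    unfolding substructure_def is_struct_def C by blast
qed

definition component_at :: "('v, 'r) struct \<Rightarrow> 'v \<Rightarrow> ('v, 'r) struct" where
  "component_at B y = struct_of_nodes (iconn B `` {VNode y})"

lemma component_at_is_component:
  assumes "y \<in> V B"
  shows "is_component (component_at B y) B"
  using assms unfolding is_component_def component_at_def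
  by (auto intro!: quotientI simp: inodes_def)

lemma in_component_at:
  assumes "y \<in> V B"
  shows "y \<in> V (component_at B y)"
  using assms unfolding component_at_def struct_of_nodes_def iconn_def inodes_def by auto

lemma component_at_eq:
  assumes "is_struct sigma ar B" "is_component C B" "y \<in> V C"
  shows "component_at B y = C"
proof -
  obtain K where K: "K \<in> inodes B // iconn B" and C: "C = struct_of_nodes K"
    using assms(2) unfolding is_component_def by blast
  obtain x where K_def: "K = iconn B `` {x}" using K by (rule quotientE)
  have "VNode y \<in> K" using assms(3) unfolding C struct_of_nodes_def by simp
  then have "iconn B `` {VNode y} = K"
    unfolding K_def by (simp add: equiv_class_eq[OF equiv_iconn[OF assms(1)]])
  then show ?thesis unfolding component_at_def C by simp
qed

lemma tuple_in_component:
  assumes "t \<in> Rel B R"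
  obtains C where "is_component C B" "t \<in> Rel C R"
proof
  show "is_component (struct_of_nodes (iconn B `` {BNode R t})) B"
    using assms unfolding is_component_def by (auto intro!: quotientI simp: inodes_def)
  show "t \<in> Rel (struct_of_nodes (iconn B `` {BNode R t})) R"
    using assms unfolding struct_of_nodes_def iconn_def inodes_def by auto
qed

definition struct_image :: "('a \<Rightarrow> 'b) \<Rightarrow> ('a, 'r) struct \<Rightarrow> ('b, 'r) struct" where
  "struct_image g C = \<lparr> V = g ` V C, Rel = (\<lambda>R. map g ` Rel C R) \<rparr>"

lemma struct_image_substructure:
  assumes C: "substructure sigma ar C B" and g: "is_hom B A g"
  shows "substructure sigma ar (struct_image g C) A"
  unfolding substructure_def is_struct_def
proof (intro conjI allI impI ballI)
  have VC: "V C \<subseteq> V B" and RC: "\<And>R. Rel C R \<subseteq> Rel B R" and SC: "is_struct sigma ar C"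
    using C unfolding substructure_def by blast+
  show "finite (V (struct_image g C))"
    using SC unfolding is_struct_def struct_image_def by simp
  show "Rel (struct_image g C) R = {}" if "R \<notin> sigma" for R
    using SC that unfolding is_struct_def struct_image_def by simp
  show "length t = ar R" "set t \<subseteq> V (struct_image g C)"
    if R: "R \<in> sigma" and t: "t \<in> Rel (struct_image g C) R" for R t
  proof -
    obtain u where u: "u \<in> Rel C R" "t = map g u" using t unfolding struct_image_def by auto
    then have "length u = ar R" "set u \<subseteq> V C"
      using SC R substructure_tuple_subset[OF C] unfolding is_struct_def by auto
    then show "length t = ar R" "set t \<subseteq> V (struct_image g C)"
      using u unfolding struct_image_def by auto
  qed
  show "V (struct_image g C) \<subseteq> V A"
    using VC g unfolding is_hom_def struct_image_def by auto
  show "Rel (struct_image g C) R \<subseteq> Rel A R" for R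
  proof
    fix t assume "t \<in> Rel (struct_image g C) R"
    then obtain u where "u \<in> Rel B R" "t = map g u" using RC unfolding struct_image_def by auto
    then show "t \<in> Rel A R" using g unfolding is_hom_def by blast
  qed
qed

lemma restr_iso_struct_image:
  assumes C: "substructure sigma ar C B" and hg: "\<forall>y\<in>V B. h (g y) = y"
  shows "restr_iso h (struct_image g C) C"
  unfolding restr_iso_def
proof (intro conjI allI impI)
  have hg_C: "h (g y) = y" if "y \<in> V C" for y
    using C hg that unfolding substructure_def by blast
  show "bij_betw h (V (struct_image g C)) (V C)"
    unfolding struct_image_def
    by (rule bij_betw_byWitness[where f' = g]) (auto simp: hg_C)
  fix R t assume t: "set t \<subseteq> V (struct_image g C)"
  then have "map g (map h t) = t"
    unfolding struct_image_def by (induct t) (auto simp: hg_C)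
  moreover have "map h (map g u) = u" if "u \<in> Rel C R" for u
    using substructure_tuple_subset[OF C that] by (induct u) (auto simp: hg_C)
  ultimately show "t \<in> Rel (struct_image g C) R \<longleftrightarrow> map h t \<in> Rel C R"
    unfolding struct_image_def by force
qed

lemma restr_iso_inv_tuple:
  assumes "restr_iso h D C" "t \<in> Rel C R" "set t \<subseteq> V C"
  shows "map (inv_into (V D) h) t \<in> Rel D R"
proof -
  have bij: "bij_betw h (V D) (V C)" using assms(1) unfolding restr_iso_def by blast
  have "set (map (inv_into (V D) h) t) \<subseteq> V D"
    using assms(3) bij_betw_imp_surj_on[OF bij] by (auto intro!: inv_into_into)
  moreover have "map h (map (inv_into (V D) h) t) = t"
    using assms(3) bij by (induct t) (auto simp: bij_betw_def f_inv_into_f)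
  ultimately show ?thesis using assms(1,2) unfolding restr_iso_def by metis
qed

lemma retraction_of_component_isos:
  assumes B: "is_struct sigma ar B" and h: "is_hom A B h"
    and F: "\<And>C. is_component C B \<Longrightarrow> substructure sigma ar (F C) A \<and> restr_iso h (F C) C"
  shows "is_retraction A B h"
proof -
  define g where "g y = inv_into (V (F (component_at B y))) h y" for y
  have g_on_component: "g y \<in> V (F C) \<and> h (g y) = y \<and> g y = inv_into (V (F C)) h y"
    if C: "is_component C B" and y: "y \<in> V C" for C y
  proof -
    have "h ` V (F C) = V C" using F[OF C] unfolding restr_iso_def bij_betw_def by blast
    then have "y \<in> h ` V (F C)" using y by simp
    moreover have "g y = inv_into (V (F C)) h y" unfolding g_def component_at_eq[OF B C y] ..
    ultimately show ?thesis by (simp add: inv_into_into f_inv_into_f)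
  qed
  have g_vertex: "g y \<in> V A" and g_section: "h (g y) = y" if "y \<in> V B" for y
  proof -
    have C: "is_component (component_at B y) B" using component_at_is_component[OF that] .
    have "V (F (component_at B y)) \<subseteq> V A" using F[OF C] unfolding substructure_def by blast
    then show "g y \<in> V A" "h (g y) = y"
      using g_on_component[OF C in_component_at[OF that]] by blast+
  qed
  have g_tuple: "map g t \<in> Rel A R" if tB: "t \<in> Rel B R" for t R
  proof -
    obtain C where C: "is_component C B" and t: "t \<in> Rel C R"
      using tuple_in_component[OF tB] .
    have sub: "set t \<subseteq> V C"
      using substructure_tuple_subset[OF component_substructure[OF B C] t] .
    then have "map g t = map (inv_into (V (F C)) h) t"
      using g_on_component[OF C] by (induct t) auto
    also have "\<dots> \<in> Rel (F C) R"
      using restr_iso_inv_tuple[OF _ t sub] F[OF C] by blast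
    finally show ?thesis using F[OF C] unfolding substructure_def by blast
  qed
  have "is_hom B A g" unfolding is_hom_def using g_vertex g_tuple by blast
  then show ?thesis unfolding is_retraction_def using h g_section by blast
qed

theorem proposition6p1:
  fixes sigma :: "'r set" and ar :: "'r \<Rightarrow> nat"
    and A :: "('a, 'r) struct" and B :: "('b, 'r) struct" and h :: "'a \<Rightarrow> 'b"
  assumes "is_type sigma"
    and "is_struct sigma ar A" and "is_struct sigma ar B"
    and "is_hom A B h"
  shows "\<not> is_retraction A B h \<longleftrightarrow>
    (\<exists>C. is_component C B \<and>
       (\<forall>D. substructure sigma ar D A \<longrightarrow> \<not> restr_iso h D C))"
proof
  assume "\<not> is_retraction A B h"
  show "\<exists>C. is_component C B \<and> (\<forall>D. substructure sigma ar D A \<longrightarrow> \<not> restr_iso h D C)"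
  proof (rule ccontr)
    assume "\<not> ?thesis"
    then obtain F where "\<And>C. is_component C B \<Longrightarrow>
        substructure sigma ar (F C) A \<and> restr_iso h (F C) C"
      by metis
    with retraction_of_component_isos[OF assms(3,4)] \<open>\<not> is_retraction A B h\<close> show False
      by blast
  qed
next
  assume "\<exists>C. is_component C B \<and> (\<forall>D. substructure sigma ar D A \<longrightarrow> \<not> restr_iso h D C)"
  then obtain C where C: "is_component C B"
    and no_iso: "\<And>D. substructure sigma ar D A \<Longrightarrow> \<not> restr_iso h D C" by blast
  show "\<not> is_retraction A B h"
  proof
    assume "is_retraction A B h"
    then obtain g where g: "is_hom B A g" and hg: "\<forall>y\<in>V B. h (g y) = y"
      unfolding is_retraction_def by blast
    have "substructure sigma ar C B" using component_substructure[OF assms(3) C] .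
    with no_iso show False
      using struct_image_substructure[OF _ g] restr_iso_struct_image[where h = h, OF _ hg]
      by blast
  qed
qed

end
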